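(* Let $X$ be a finite set and $(\mathcal{T}_X,\leq)$ the ordered full transformation semigroup with the natural partial order. For $f,g\in\mathcal{T}_X$ let $B(f)=(f\cup f\mathcal{T}_Xf]$ and $B(g)=(g\cup g\mathcal{T}_Xg]$ be the principal bi-ideals they generate. Then $f\,\mathscr{L}_{\mathcal{T}_X}\,g$ if and only if $B(f)\,\mathscr{L}_{\mathcal{B}(\mathcal{T}_X)}\,B(g)$, where for bi-ideals $B_1,B_2$ of $(\mathcal{T}_X,\leq)$ we define $B_1\,\mathscr{L}_{\mathcal{B}(\mathcal{T}_X)}\,B_2$ to mean: for each $b_1\in B_1$ there exists $b_2\in B_2$ with $b_1\,\mathscr{L}_{\mathcal{T}_X}\,b_2$, and for each $b_2'\in B_2$ there exists $b_1'\in B_1$ with $b_1'\,\mathscr{L}_{\mathcal{T}_X}\,b_2'$.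
   Context: $\mathcal{T}_X$ is the semigroup of all maps $X\to X$, maps written on the right and composed left to right. Natural partial order: $f\leq g$ iff $f\mathcal{T}_X^1\subseteq g\mathcal{T}_X^1$ and $f=\alpha f=\alpha g$ for some $\alpha\in\mathcal{T}_X$; $(\mathcal{T}_X,\leq)$ is then a regular ordered semigroup. For $A\subseteq\mathcal{T}_X$, $(A]=\{h: h\leq a\text{ for some }a\in A\}$. A bi-ideal is a nonempty $A$ with $A\mathcal{T}_XA\subseteq A$ and $(A]=A$. $\mathscr{L}_{\mathcal{T}_X}$ is the Green's $\mathscr{L}$-relation of the ordered semigroup $(\mathcal{T}_X,\leq)$: $f\,\mathscr{L}_{\mathcal{T}_X}\,g$ iff $(f\cup\mathcal{T}_Xf]=(g\cup\mathcal{T}_Xg]$ (equivalently, $\operatorname{Im}f=\operatorname{Im}g$). *)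

theory Defs
  imports Main
begin

text \<open>Maps are written on the right and composed left to right, so the product
  f g means "first f, then g", i.e. the HOL function g \<circ> f.\<close>

definition tmul :: "('a \<Rightarrow> 'a) \<Rightarrow> ('a \<Rightarrow> 'a) \<Rightarrow> ('a \<Rightarrow> 'a)" where
  "tmul f g = g \<circ> f"

definition rideal1 :: "('a \<Rightarrow> 'a) \<Rightarrow> ('a \<Rightarrow> 'a) set" where
  "rideal1 f = {f} \<union> {tmul f h | h. True}"

definition nat_le :: "('a \<Rightarrow> 'a) \<Rightarrow> ('a \<Rightarrow> 'a) \<Rightarrow> bool" where
  "nat_le f g \<longleftrightarrow> rideal1 f \<subseteq> rideal1 g \<and> (\<exists>\<alpha>. f = tmul \<alpha> f \<and> f = tmul \<alpha> g)"

definition down :: "('a \<Rightarrow> 'a) set \<Rightarrow> ('a \<Rightarrow> 'a) set" where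
  "down A = {h. \<exists>a\<in>A. nat_le h a}"

definition Bideal :: "('a \<Rightarrow> 'a) \<Rightarrow> ('a \<Rightarrow> 'a) set" where
  "Bideal f = down ({f} \<union> {tmul (tmul f h) f | h. True})"

definition L_rel :: "('a \<Rightarrow> 'a) \<Rightarrow> ('a \<Rightarrow> 'a) \<Rightarrow> bool" where
  "L_rel f g \<longleftrightarrow> down ({f} \<union> {tmul h f | h. True}) = down ({g} \<union> {tmul h g | h. True})"

definition L_bi :: "('a \<Rightarrow> 'a) set \<Rightarrow> ('a \<Rightarrow> 'a) set \<Rightarrow> bool" where
  "L_bi B1 B2 \<longleftrightarrow> (\<forall>b1\<in>B1. \<exists>b2\<in>B2. L_rel b1 b2) \<and> (\<forall>b2\<in>B2. \<exists>b1\<in>B1. L_rel b1 b2)"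

end

theory Submission
  imports Defs
begin

text \<open>Both relations only see images. If h \<le> a then h = \<alpha> a, i.e. h = a \<circ> \<alpha>, so
  Im h \<subseteq> Im a; hence the principal left ideal (f \<union> T_X f] is the set of maps whose
  image lies in Im f, and f L g amounts to Im f = Im g. For the same reason every member of
  B(f) has image inside Im f; conversely a nonempty T \<subseteq> Im f is the image of
  f h f \<in> B(f) when h sends each y to an f-preimage of r y, r being a retraction of the
  whole set onto T. So the images of the members of B(f) are exactly the nonempty subsets
  of Im f, and B(f) L B(g) says that these families agree for f and g, i.e. Im f = Im g.\<close>

lemma nat_le_refl: "nat_le f f"
  unfolding nat_le_def tmul_def by (auto intro: exI[of _ id])

lemma subset_down: "A \<subseteq> down A"
  unfolding down_def using nat_le_refl by blast

lemma range_subset_if_nat_le: "nat_le h a \<Longrightarrow> range h \<subseteq> range a"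
  unfolding nat_le_def tmul_def by auto

lemma range_subset_if_mem_down:
  assumes "h \<in> down A" and "\<And>a. a \<in> A \<Longrightarrow> range a \<subseteq> S"
  shows "range h \<subseteq> S"
  using assms range_subset_if_nat_le unfolding down_def by blast

lemma down_principal_left_ideal:
  fixes f :: "'a \<Rightarrow> 'a"
  shows "down ({f} \<union> {tmul h f | h. True}) = {k. range k \<subseteq> range f}"
proof (intro equalityI subsetI)
  fix k :: "'a \<Rightarrow> 'a"
  assume "k \<in> down ({f} \<union> {tmul h f | h. True})"
  then have "range k \<subseteq> range f"
    by (rule range_subset_if_mem_down) (auto simp: tmul_def)
  then show "k \<in> {k. range k \<subseteq> range f}" by simp
next
  fix k :: "'a \<Rightarrow> 'a"
  assume "k \<in> {k. range k \<subseteq> range f}"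
  then have "f (inv f (k x)) = k x" for x
    by (blast intro: f_inv_into_f)
  then have "k = tmul (inv f \<circ> k) f"
    by (simp add: tmul_def fun_eq_iff)
  then have "k \<in> {f} \<union> {tmul h f | h. True}"
    by blast
  then show "k \<in> down ({f} \<union> {tmul h f | h. True})"
    by (rule subsetD[OF subset_down])
qed

lemma L_rel_iff_range_eq:
  fixes f g :: "'a \<Rightarrow> 'a"
  shows "L_rel f g \<longleftrightarrow> range f = range g"
  unfolding L_rel_def down_principal_left_ideal
proof
  assume eq: "{k :: 'a \<Rightarrow> 'a. range k \<subseteq> range f} = {k. range k \<subseteq> range g}"
  have "range f \<subseteq> range g"
    using eq[THEN equalityD1, THEN subsetD, of f] by simp
  moreover have "range g \<subseteq> range f"
    using eq[THEN equalityD2, THEN subsetD, of g] by simp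
  ultimately show "range f = range g" by (rule subset_antisym)
qed simp

lemma range_image_subset_iff:
  "range ` A \<subseteq> range ` B \<longleftrightarrow> (\<forall>a\<in>A. \<exists>b\<in>B. range a = range b)"
  by (simp add: image_subset_iff image_iff)

lemma L_bi_iff_range_image_eq:
  fixes B\<^sub>1 B\<^sub>2 :: "('a \<Rightarrow> 'a) set"
  shows "L_bi B\<^sub>1 B\<^sub>2 \<longleftrightarrow> range ` B\<^sub>1 = range ` B\<^sub>2"
  unfolding L_bi_def L_rel_iff_range_eq set_eq_subset[of "range ` B\<^sub>1"] range_image_subset_iff
  by (simp add: eq_commute)

lemma range_subset_if_mem_Bideal: "b \<in> Bideal f \<Longrightarrow> range b \<subseteq> range f"
  unfolding Bideal_def by (erule range_subset_if_mem_down) (auto simp: tmul_def)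

lemma obtain_mem_Bideal_with_range:
  fixes f :: "'a \<Rightarrow> 'a"
  assumes "T \<subseteq> range f" and "t\<^sub>0 \<in> T"
  obtains k where "k \<in> Bideal f" and "range k = T"
proof
  define r where "r y = (if y \<in> T then y else t\<^sub>0)" for y
  define k where "k = tmul (tmul f (inv f \<circ> r)) f"
  have "r y \<in> range f" for y
    using assms unfolding r_def by auto
  then have k_apply: "k x = r (f x)" for x
    unfolding k_def tmul_def by (simp add: f_inv_into_f)
  have "k \<in> {f} \<union> {tmul (tmul f h) f | h. True}"
    unfolding k_def by blast
  then show "k \<in> Bideal f"
    unfolding Bideal_def by (rule subsetD[OF subset_down])
  show "range k = T"
  proof (intro equalityI subsetI)
    fix t assume "t \<in> range k"
    then show "t \<in> T" using assms(2) unfolding k_apply r_def by auto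
  next
    fix t assume "t \<in> T"
    moreover obtain x where "t = f x" using \<open>t \<in> T\<close> assms(1) by auto
    ultimately have "k x = t" unfolding k_apply r_def by simp
    then show "t \<in> range k" by (metis rangeI)
  qed
qed

lemma range_image_Bideal:
  fixes f :: "'a \<Rightarrow> 'a"
  shows "range ` Bideal f = {T. T \<noteq> {} \<and> T \<subseteq> range f}"
proof (intro equalityI subsetI)
  fix T assume "T \<in> range ` Bideal f"
  then obtain b where "b \<in> Bideal f" and "T = range b"
    by (rule imageE) simp
  then show "T \<in> {T. T \<noteq> {} \<and> T \<subseteq> range f}"
    using range_subset_if_mem_Bideal[of b f] by auto
next
  fix T assume "T \<in> {T. T \<noteq> {} \<and> T \<subseteq> range f}"
  then obtain t where "T \<subseteq> range f" and "t \<in> T"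
    by auto
  then obtain k where k: "k \<in> Bideal f" and "range k = T"
    by (rule obtain_mem_Bideal_with_range)
  from k show "T \<in> range ` Bideal f"
    unfolding \<open>range k = T\<close>[symmetric] by (rule imageI)
qed

lemma nonempty_subsets_eq_iff:
  assumes "A \<noteq> {}" and "B \<noteq> {}"
  shows "{T. T \<noteq> {} \<and> T \<subseteq> A} = {T. T \<noteq> {} \<and> T \<subseteq> B} \<longleftrightarrow> A = B"
proof
  assume eq: "{T. T \<noteq> {} \<and> T \<subseteq> A} = {T. T \<noteq> {} \<and> T \<subseteq> B}"
  have "A \<subseteq> B"
    using eq[THEN equalityD1, THEN subsetD, of A] assms(1) by simp
  moreover have "B \<subseteq> A"
    using eq[THEN equalityD2, THEN subsetD, of B] assms(2) by simp
  ultimately show "A = B" by (rule subset_antisym)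
qed simp

theorem mainTheorem10:
  fixes f g :: "'a::finite \<Rightarrow> 'a"
  shows "L_rel f g \<longleftrightarrow> L_bi (Bideal f) (Bideal g)"
proof -
  have "L_rel f g \<longleftrightarrow> range f = range g"
    by (rule L_rel_iff_range_eq)
  also have "\<dots> \<longleftrightarrow> range ` Bideal f = range ` Bideal g"
    unfolding range_image_Bideal by (simp add: nonempty_subsets_eq_iff)
  also have "\<dots> \<longleftrightarrow> L_bi (Bideal f) (Bideal g)"
    by (rule L_bi_iff_range_image_eq[symmetric])
  finally show ?thesis .
qed

end
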